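(* For all $\lambda\in[0,1]$ and $\Delta_1,\Delta_2,\Delta_3\in[0,\frac12]$, $C_{\mathrm{SKL}}((\mathrm{BSC}_{\Delta_1}\times\mathrm{BSC}_{\Delta_2}\times\mathrm{BSC}_{\Delta_3})\circ B_{4,\lambda})\le\lambda^2\sum_{i=1}^3C_{\mathrm{SKL}}(\mathrm{BSC}_{\Delta_i})$, and the inequality is strict when $0<\lambda<1$ and $\min\{\Delta_1,\Delta_2,\Delta_3\}<\frac12$.
   Context: $\mathrm{BSC}_\Delta:\{\pm\}\to\{\pm\}$ flips the input with probability $\Delta$. $B_{4,\lambda}:\{\pm\}\to\{\pm\}^3$ is the kernel $B_{4,\lambda}(x_1,x_2,x_3|y)=\lambda+\frac18(1-\lambda)$ if $x_1=x_2=x_3=y$ and $\frac18(1-\lambda)$ otherwise. $\times$ is the tensor product of channels. For a binary-input channel $P$, $C_{\mathrm{SKL}}(P)$ is the SKL information ($f$-information with $f(x)=(x-1)\log x$) between $X\sim\mathrm{Unif}(\{\pm\})$ and the output of $P$; in particular $C_{\mathrm{SKL}}(\mathrm{BSC}_\Delta)=\theta\,\mathrm{arctanh}\,\theta$ with $\theta=1-2\Delta$. *)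

theory Defs
  imports "HOL-Analysis.Analysis"
begin

text \<open>Signs {+,-} are encoded as bool (True = +). A channel with input type 'a and
output type 'b is a kernel W :: 'a => 'b => real, W x y = probability of output y given input x.\<close>

definition BSC :: "real \<Rightarrow> bool \<Rightarrow> bool \<Rightarrow> real" where
  "BSC \<Delta> x y = (if x = y then 1 - \<Delta> else \<Delta>)"

definition B4 :: "real \<Rightarrow> bool \<Rightarrow> bool \<times> bool \<times> bool \<Rightarrow> real" where
  "B4 lam y x = (case x of (x1, x2, x3) \<Rightarrow>
      (if x1 = y \<and> x2 = y \<and> x3 = y then lam + (1 - lam) / 8 else (1 - lam) / 8))"

definition tensor3 ::
  "('a1 \<Rightarrow> 'b1 \<Rightarrow> real) \<Rightarrow> ('a2 \<Rightarrow> 'b2 \<Rightarrow> real) \<Rightarrow> ('a3 \<Rightarrow> 'b3 \<Rightarrow> real)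
   \<Rightarrow> 'a1 \<times> 'a2 \<times> 'a3 \<Rightarrow> 'b1 \<times> 'b2 \<times> 'b3 \<Rightarrow> real" where
  "tensor3 P1 P2 P3 x z = (case x of (x1, x2, x3) \<Rightarrow> case z of (z1, z2, z3) \<Rightarrow>
      P1 x1 z1 * P2 x2 z2 * P3 x3 z3)"

text \<open>Composition P \<circ> B of channels (first B, then P), finite intermediate alphabet.\<close>
definition compose :: "('b::finite \<Rightarrow> 'c \<Rightarrow> real) \<Rightarrow> ('a \<Rightarrow> 'b \<Rightarrow> real) \<Rightarrow> 'a \<Rightarrow> 'c \<Rightarrow> real" where
  "compose P B y z = (\<Sum>x\<in>UNIV. B y x * P x z)"

text \<open>f(t) = (t-1) log t, extended by f(0) = +infinity (its limit).\<close>
definition skl_f :: "real \<Rightarrow> ereal" where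
  "skl_f t = (if t = 0 then \<infinity> else ereal ((t - 1) * ln t))"

text \<open>Term q f(p/q) of an f-divergence, with conventions 0 f(0/0) = 0 and
  p f(p/0)... = p * lim f(t)/t = +infinity for p > 0.\<close>
definition fterm :: "real \<Rightarrow> real \<Rightarrow> ereal" where
  "fterm p q = (if q = 0 then (if p = 0 then 0 else \<infinity>) else ereal q * skl_f (p / q))"

text \<open>SKL information I_f(X;Y) = D_f(P_XY || P_X P_Y) with X ~ Unif(bool), Y the channel output.\<close>
definition C_SKL :: "(bool \<Rightarrow> 'b::finite \<Rightarrow> real) \<Rightarrow> ereal" where
  "C_SKL W = (\<Sum>x\<in>UNIV. \<Sum>y\<in>UNIV.
      fterm (W x y / 2) ((1/2) * ((W True y + W False y) / 2)))"

end

theory Submission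
  imports Defs
begin

text \<open>
  Write \<open>V(z|y) = \<Prod>\<^sub>i BSC\<^sub>\<Delta>\<^sub>i(z\<^sub>i|y)\<close> for the three BSCs run in parallel on one input. The
  composed channel is the mixture \<open>(1 - \<lambda>) \<cdot> Unif + \<lambda> \<cdot> V\<close>, and for a positive kernel \<open>W\<close> the
  SKL information is \<open>\<Sum>\<^sub>z (W(z|+) - W(z|-))/4 \<cdot> (ln W(z|+) - ln W(z|-))\<close>, which is additive
  over the factors of \<open>V\<close>. So it suffices to prove, output by output, with \<open>p = 8 V(z|+)\<close> and
  \<open>m = 8 V(z|-)\<close>, that \<open>(p - m)(ln (1 - \<lambda> + \<lambda> p) - ln (1 - \<lambda> + \<lambda> m)) \<le> \<lambda> (p - m)(ln p - ln m)\<close>.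

  For \<open>p > m\<close> we have \<open>p m \<le> 1\<close> and, by Hoelder's inequality applied to the factors
  \<open>1 + a\<^sub>i / b\<^sub>i\<close> with \<open>a\<^sub>i + b\<^sub>i = 2\<close>, also \<open>p - m < ln p - ln m\<close>. Then
  \<open>F(t) = t (ln p - ln m) - ln (1 - t + t p) + ln (1 - t + t m)\<close> vanishes at \<open>0\<close> and \<open>1\<close>, and
  its derivative is positive at \<open>0\<close> and changes sign at most once, so \<open>F > 0\<close> on \<open>(0, 1)\<close>.
\<close>

lemma cube_sum_ge_3_mult:
  fixes x y z :: real
  assumes "0 \<le> x" "0 \<le> y" "0 \<le> z"
  shows "3 * x * y * z \<le> x ^ 3 + y ^ 3 + z ^ 3"
proof -
  have "x ^ 3 + y ^ 3 + z ^ 3 - 3 * x * y * z = (x + y + z) * ((x - y)\<^sup>2 + (y - z)\<^sup>2 + (z - x)\<^sup>2) / 2"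
    by (simp add: power2_eq_square power3_eq_cube algebra_simps)
  moreover have "0 \<le> (x + y + z) * ((x - y)\<^sup>2 + (y - z)\<^sup>2 + (z - x)\<^sup>2) / 2"
    using assms by simp
  ultimately show ?thesis by linarith
qed

lemma one_plus_cube_prod_le:
  fixes x y z :: real
  assumes "0 \<le> x" "0 \<le> y" "0 \<le> z"
  shows "(1 + x * y * z) ^ 3 \<le> (1 + x ^ 3) * (1 + y ^ 3) * (1 + z ^ 3)"
proof -
  have "(1 + x ^ 3) * (1 + y ^ 3) * (1 + z ^ 3) - (1 + x * y * z) ^ 3
      = (x ^ 3 + y ^ 3 + z ^ 3 - 3 * x * y * z)
        + ((x * y) ^ 3 + (y * z) ^ 3 + (z * x) ^ 3 - 3 * (x * y) * (y * z) * (z * x))"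
    by (simp add: power3_eq_cube algebra_simps)
  moreover have "3 * x * y * z \<le> x ^ 3 + y ^ 3 + z ^ 3"
    using cube_sum_ge_3_mult assms by blast
  moreover have "3 * (x * y) * (y * z) * (z * x) \<le> (x * y) ^ 3 + (y * z) ^ 3 + (z * x) ^ 3"
    using cube_sum_ge_3_mult[of "x * y" "y * z" "z * x"] assms by simp
  ultimately show ?thesis by linarith
qed

lemma cube_ratio_lt_ln:
  fixes s :: real
  assumes "1 < s"
  shows "8 * (s ^ 3 - 1) / (1 + s) ^ 3 < 3 * ln s"
proof -
  define f where "f x = 3 * ln x - 8 * (x ^ 3 - 1) / (1 + x) ^ 3" for x :: real
  define f' where "f' x = 3 * (x - 1) ^ 4 / (x * (1 + x) ^ 4)" for x :: real
  have "(f has_real_derivative f' x) (at x)" if "0 < x" for x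
  proof -
    have "(f has_real_derivative
        3 * (1 / x) - (8 * (3 * x\<^sup>2) * (1 + x) ^ 3 - 8 * (x ^ 3 - 1) * (3 * (1 + x)\<^sup>2)) / ((1 + x) ^ 3)\<^sup>2) (at x)"
      unfolding f_def using that by (auto intro!: derivative_eq_intros)
    moreover have "3 * (1 / x) - (8 * (3 * x\<^sup>2) * (1 + x) ^ 3 - 8 * (x ^ 3 - 1) * (3 * (1 + x)\<^sup>2)) / ((1 + x) ^ 3)\<^sup>2
        = f' x"
      unfolding f'_def using that by (simp add: field_simps) algebra
    ultimately show ?thesis by simp
  qed
  then obtain \<xi> where \<xi>: "1 < \<xi>" "f s - f 1 = (s - 1) * f' \<xi>"
    using MVT2[OF assms, of f f'] by force
  have "0 < f' \<xi>" using \<xi>(1) by (simp add: f'_def)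
  with \<xi> assms have "0 < f s" by (simp add: f_def)
  then show ?thesis by (simp add: f_def)
qed

lemma prod_diff_lt_ln_diff:
  fixes a1 a2 a3 b1 b2 b3 :: real
  assumes pos: "0 < a1" "0 < a2" "0 < a3" "0 < b1" "0 < b2" "0 < b3"
    and sum: "a1 + b1 = 2" "a2 + b2 = 2" "a3 + b3 = 2"
    and gt: "b1 * b2 * b3 < a1 * a2 * a3"
  shows "a1 * a2 * a3 - b1 * b2 * b3 < ln (a1 * a2 * a3) - ln (b1 * b2 * b3)"
proof -
  define p m where "p = a1 * a2 * a3" and "m = b1 * b2 * b3"
  define u1 u2 u3 where "u1 = root 3 (a1 / b1)" and "u2 = root 3 (a2 / b2)" and "u3 = root 3 (a3 / b3)"
  define s where "s = u1 * u2 * u3"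
  have m_pos: "0 < m" and p_pos: "0 < p" using pos by (simp_all add: p_def m_def)
  have u_pos: "0 < u1" "0 < u2" "0 < u3" using pos by (simp_all add: u1_def u2_def u3_def)
  have u_cube: "u1 ^ 3 = a1 / b1" "u2 ^ 3 = a2 / b2" "u3 ^ 3 = a3 / b3"
    using pos by (simp_all add: u1_def u2_def u3_def)
  have s_cube: "s ^ 3 = p / m"
    using u_cube by (simp add: s_def p_def m_def power_mult_distrib)
  then have "1 < s ^ 3" using gt m_pos by (simp add: p_def m_def)
  moreover have "0 \<le> s" using u_pos by (simp add: s_def)
  ultimately have s_gt: "1 < s" by (meson not_less power_le_one)
  \<comment> \<open>Since \<open>b\<^sub>i (1 + a\<^sub>i / b\<^sub>i) = 2\<close>, Hoelder's inequality for three factors bounds \<open>m\<close> by \<open>8 / (1 + s)\<^sup>3\<close>.\<close>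
  have "m * (1 + s) ^ 3 \<le> m * ((1 + u1 ^ 3) * (1 + u2 ^ 3) * (1 + u3 ^ 3))"
    using one_plus_cube_prod_le[of u1 u2 u3] u_pos m_pos by (simp add: s_def)
  also have "\<dots> = (b1 + a1) * (b2 + a2) * (b3 + a3)"
    using pos by (simp add: u_cube p_def m_def field_simps)
  also have "\<dots> = 8" using sum by (simp add: add.commute)
  finally have "m \<le> 8 / (1 + s) ^ 3" using s_gt by (simp add: field_simps)
  then have "m * (s ^ 3 - 1) \<le> 8 / (1 + s) ^ 3 * (s ^ 3 - 1)"
    using \<open>1 < s ^ 3\<close> by (intro mult_right_mono) auto
  moreover have "p - m = m * (s ^ 3 - 1)" using s_cube m_pos by (simp add: field_simps)
  ultimately have "p - m \<le> 8 / (1 + s) ^ 3 * (s ^ 3 - 1)" by simp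
  also have "\<dots> < 3 * ln s" using cube_ratio_lt_ln[OF s_gt] by simp
  also have "\<dots> = ln (s ^ 3)" using s_gt by (simp add: ln_realpow)
  also have "\<dots> = ln p - ln m" using s_cube p_pos m_pos by (simp add: ln_div)
  finally show ?thesis by (simp add: p_def m_def)
qed

lemma prod_mult_prod_le_one:
  fixes a1 a2 a3 b1 b2 b3 :: real
  assumes "0 < a1" "0 < a2" "0 < a3" "0 < b1" "0 < b2" "0 < b3"
    and "a1 + b1 = 2" "a2 + b2 = 2" "a3 + b3 = 2"
  shows "(a1 * a2 * a3) * (b1 * b2 * b3) \<le> 1"
proof -
  have le1: "a * b \<le> 1" if "a + b = 2" for a b :: real
  proof -
    have "b = 2 - a" using that by simp
    moreover have "a * (2 - a) = 1 - (a - 1)\<^sup>2" by (simp add: power2_eq_square algebra_simps)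
    moreover have "0 \<le> (a - 1)\<^sup>2" by simp
    ultimately show ?thesis by (simp only:)
  qed
  have "(a1 * a2 * a3) * (b1 * b2 * b3) = (a1 * b1) * (a2 * b2) * (a3 * b3)"
    by (simp add: algebra_simps)
  also have "\<dots> \<le> 1"
  proof (rule mult_le_one)
    show "(a1 * b1) * (a2 * b2) \<le> 1"
      using assms le1[of a1 b1] le1[of a2 b2] by (simp add: mult_le_one)
  qed (use assms le1[of a3 b3] in auto)
  finally show ?thesis .
qed

lemma pos_between_roots_if_deriv_crosses_once:
  fixes F F' :: "real \<Rightarrow> real"
  assumes roots: "F a = 0" "F b = 0" and x: "a < x" "x < b"
    and deriv: "\<And>t. a \<le> t \<Longrightarrow> t \<le> b \<Longrightarrow> (F has_real_derivative F' t) (at t)"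
    and crossing: "\<And>\<mu> \<nu>. a \<le> \<mu> \<Longrightarrow> \<mu> < \<nu> \<Longrightarrow> \<nu> \<le> b \<Longrightarrow> 0 \<le> F' \<nu> \<Longrightarrow> 0 < F' \<mu>"
  shows "0 < F x"
proof (cases "0 < F' x")
  case True
  obtain \<xi> where \<xi>: "a < \<xi>" "\<xi> < x" "F x - F a = (x - a) * F' \<xi>"
    using MVT2[OF x(1), of F F'] deriv x by force
  have "0 < F' \<xi>" using crossing[of \<xi> x] True \<xi> x by simp
  then show ?thesis using \<xi> roots by simp
next
  case False
  obtain \<xi> where \<xi>: "x < \<xi>" "\<xi> < b" "F b - F x = (b - x) * F' \<xi>"
    using MVT2[OF x(2), of F F'] deriv x by force
  have "F' \<xi> < 0" using crossing[of x \<xi>] False \<xi> x by force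
  then have "(b - x) * F' \<xi> < 0" using \<xi> by (simp add: mult_pos_neg)
  then show ?thesis using \<xi> roots by simp
qed

lemma ln_mixture_diff_lt:
  fixes p m lam :: real
  assumes m: "0 < m" "m < 1" and gt: "m < p" and gap: "p - m < ln p - ln m"
    and lam: "0 < lam" "lam < 1"
  shows "ln (1 - lam + lam * p) - ln (1 - lam + lam * m) < lam * (ln p - ln m)"
proof -
  define r where "r = ln p - ln m"
  define P M where "P t = 1 - t + t * p" and "M t = 1 - t + t * m" for t
  define G where "G t = r * (P t * M t) - (p - m)" for t
  define F where "F t = t * r - ln (P t) + ln (M t)" for t
  have convex_comb_pos: "0 < 1 - t + t * q" if "0 < q" "0 \<le> t" "t \<le> 1" for q t :: real
    using that by (cases "t = 0") (auto intro: add_nonneg_pos)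
  have PM_pos: "0 < P t" "0 < M t" if "0 \<le> t" "t \<le> 1" for t
    using convex_comb_pos that m gt by (simp_all add: P_def M_def)
  have deriv: "(F has_real_derivative G t / (P t * M t)) (at t)" if "0 \<le> t" "t \<le> 1" for t
  proof -
    have "(F has_real_derivative r - (p - 1) / P t + (m - 1) / M t) (at t)"
      unfolding F_def using PM_pos[OF that] by (auto simp: P_def M_def intro!: derivative_eq_intros)
    moreover have "r - (p - 1) / P t + (m - 1) / M t = G t / (P t * M t)"
      using PM_pos[OF that] by (simp add: G_def P_def M_def field_simps)
    ultimately show ?thesis by simp
  qed
  have r_pos: "0 < r" using gap gt by (simp add: r_def)
  \<comment> \<open>\<open>G\<close> is positive at \<open>0\<close> and is either concave (\<open>p \<ge> 1\<close>) or decreasing (\<open>p < 1\<close>) on \<open>[0, 1]\<close>.\<close>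
  have crossing: "0 < G \<mu>" if "0 \<le> \<mu>" "\<mu> < \<nu>" "\<nu> \<le> 1" "0 \<le> G \<nu>" for \<mu> \<nu>
  proof (cases "1 \<le> p")
    case True
    have "\<nu> * G \<mu> = (\<nu> - \<mu>) * G 0 + \<mu> * G \<nu> + r * (\<mu> * \<nu> * (\<nu> - \<mu>) * (p - 1) * (1 - m))"
      by (simp add: G_def P_def M_def algebra_simps)
    moreover have "0 < (\<nu> - \<mu>) * G 0" using that gap by (simp add: G_def P_def M_def r_def)
    moreover have "0 \<le> r * (\<mu> * \<nu> * (\<nu> - \<mu>) * (p - 1) * (1 - m))"
      using that True m r_pos by simp
    moreover have "0 \<le> \<mu> * G \<nu>" using that by simp
    ultimately have "0 < \<nu> * G \<mu>" by linarith
    then show ?thesis using that by (simp add: zero_less_mult_iff)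
  next
    case False
    have "P \<mu> - P \<nu> = (\<nu> - \<mu>) * (1 - p)" "M \<mu> - M \<nu> = (\<nu> - \<mu>) * (1 - m)"
      by (simp_all add: P_def M_def algebra_simps)
    moreover have "0 < (\<nu> - \<mu>) * (1 - p)" "0 \<le> (\<nu> - \<mu>) * (1 - m)" using that False m by simp_all
    ultimately have "P \<nu> < P \<mu>" "M \<nu> \<le> M \<mu>" by linarith+
    then have "P \<nu> * M \<nu> < P \<mu> * M \<mu>"
      using PM_pos[of \<nu>] that by (intro mult_less_le_imp_less) auto
    then have "G \<nu> < G \<mu>" using r_pos by (simp add: G_def)
    then show ?thesis using that by simp
  qed
  have "0 < F lam"
  proof (rule pos_between_roots_if_deriv_crosses_once[OF _ _ lam deriv])
    show "F 0 = 0" by (simp add: F_def P_def M_def)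
    show "F 1 = 0" using m gt by (simp add: F_def P_def M_def r_def)
    show "0 < G \<mu> / (P \<mu> * M \<mu>)"
      if "0 \<le> \<mu>" "\<mu> < \<nu>" "\<nu> \<le> 1" "0 \<le> G \<nu> / (P \<nu> * M \<nu>)" for \<mu> \<nu>
    proof -
      have "0 < P \<mu> * M \<mu>" "0 < P \<nu> * M \<nu>" using PM_pos that by simp_all
      then show ?thesis using that crossing[of \<mu> \<nu>] by (simp add: zero_le_divide_iff)
    qed
  qed
  then show ?thesis by (simp add: F_def P_def M_def r_def)
qed

definition skl_term :: "real \<Rightarrow> real \<Rightarrow> real" where
  "skl_term x y = (x - y) / 4 * (ln x - ln y)"

lemma skl_term_commute: "skl_term x y = skl_term y x"
  by (simp add: skl_term_def algebra_simps)

lemma skl_term_nonneg: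
  assumes "0 < x" "0 < y"
  shows "0 \<le> skl_term x y"
proof (cases "x \<le> y")
  case True
  then show ?thesis using assms by (simp add: skl_term_def mult_nonpos_nonpos)
next
  case False
  then show ?thesis using assms by (simp add: skl_term_def)
qed

lemma skl_term_scale:
  assumes "0 < c" "0 < x" "0 < y"
  shows "skl_term (x / c) (y / c) = skl_term x y / c"
  using assms by (simp add: skl_term_def ln_div field_simps)

lemma skl_term_mix_lt:
  fixes p m lam :: real
  assumes "0 < m" "m < 1" "m < p" "p - m < ln p - ln m" "0 < lam" "lam < 1"
  shows "skl_term (1 - lam + lam * p) (1 - lam + lam * m) < lam\<^sup>2 * skl_term p m"
proof -
  have "skl_term (1 - lam + lam * p) (1 - lam + lam * m)
      = lam * (p - m) / 4 * (ln (1 - lam + lam * p) - ln (1 - lam + lam * m))"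
    by (simp add: skl_term_def algebra_simps)
  also have "\<dots> < lam * (p - m) / 4 * (lam * (ln p - ln m))"
    using ln_mixture_diff_lt[OF assms] assms by (intro mult_strict_left_mono) auto
  also have "\<dots> = lam\<^sup>2 * skl_term p m"
    by (simp add: skl_term_def power2_eq_square)
  finally show ?thesis .
qed

lemma skl_term_mix_le:
  fixes a1 a2 a3 b1 b2 b3 lam :: real
  assumes pos: "0 < a1" "0 < a2" "0 < a3" "0 < b1" "0 < b2" "0 < b3"
    and sum: "a1 + b1 = 2" "a2 + b2 = 2" "a3 + b3 = 2"
    and lam: "0 \<le> lam" "lam \<le> 1"
  defines "p \<equiv> a1 * a2 * a3" and "m \<equiv> b1 * b2 * b3"
  shows "skl_term (1 - lam + lam * p) (1 - lam + lam * m) \<le> lam\<^sup>2 * skl_term p m"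
    and "p \<noteq> m \<Longrightarrow> 0 < lam \<Longrightarrow> lam < 1 \<Longrightarrow>
      skl_term (1 - lam + lam * p) (1 - lam + lam * m) < lam\<^sup>2 * skl_term p m"
proof -
  have pm_pos: "0 < p" "0 < m" using pos by (simp_all add: p_def m_def)
  have pm_le: "p * m \<le> 1" using prod_mult_prod_le_one[OF pos sum] by (simp add: p_def m_def)
  have lt_one: "y < 1" if "0 < y" "y < x" "x * y \<le> 1" for x y :: real
  proof (rule ccontr)
    assume "\<not> y < 1"
    then have "1 * 1 < x * y" using that by (intro mult_less_le_imp_less) auto
    then show False using that by simp
  qed
  show strict: "skl_term (1 - lam + lam * p) (1 - lam + lam * m) < lam\<^sup>2 * skl_term p m"
    if "p \<noteq> m" "0 < lam" "lam < 1"
  proof (cases "m < p")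
    case True
    have "p - m < ln p - ln m" using prod_diff_lt_ln_diff[OF pos sum] True by (simp add: p_def m_def)
    then show ?thesis using skl_term_mix_lt True that pm_pos lt_one[of m p] pm_le by simp
  next
    case False
    then have "p < m" using that by simp
    moreover have "m - p < ln m - ln p"
      using prod_diff_lt_ln_diff[of b1 b2 b3 a1 a2 a3] pos sum \<open>p < m\<close> by (simp add: p_def m_def algebra_simps)
    ultimately show ?thesis
      using skl_term_mix_lt[of p m lam] that pm_pos lt_one[of p m] pm_le
      by (simp add: skl_term_commute mult.commute)
  qed
  show "skl_term (1 - lam + lam * p) (1 - lam + lam * m) \<le> lam\<^sup>2 * skl_term p m"
  proof (cases "p = m \<or> lam = 0 \<or> lam = 1")
    case True
    then show ?thesis by (auto simp: skl_term_def)
  next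
    case False
    then show ?thesis using strict lam by (simp add: less_imp_le)
  qed
qed

definition skl_sum :: "(bool \<Rightarrow> 'b::finite \<Rightarrow> real) \<Rightarrow> real" where
  "skl_sum W = (\<Sum>y\<in>UNIV. skl_term (W True y) (W False y))"

lemma skl_sum_nonneg:
  assumes "\<And>x y. 0 < W x y"
  shows "0 \<le> skl_sum W"
  unfolding skl_sum_def using assms by (intro sum_nonneg skl_term_nonneg)

lemma C_SKL_eq_skl_sum:
  fixes W :: "bool \<Rightarrow> 'b::finite \<Rightarrow> real"
  assumes pos: "\<And>x y. 0 < W x y"
  shows "C_SKL W = ereal (skl_sum W)"
proof -
  have "(\<Sum>x\<in>UNIV. fterm (W x y / 2) ((W True y + W False y) / 4))
      = ereal (skl_term (W True y) (W False y))" for y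
  proof -
    define q where "q = (W True y + W False y) / 4"
    have q_pos: "0 < q" using pos[of True y] pos[of False y] by (simp add: q_def)
    have "fterm (W x y / 2) q = ereal ((W x y / 2 - q) * (ln (W x y) - ln (2 * q)))" for x
      using q_pos pos[of x y] by (simp add: fterm_def skl_f_def ln_div field_simps)
    then show ?thesis
      by (simp add: UNIV_bool q_def skl_term_def field_simps)
  qed
  then have "C_SKL W = (\<Sum>y\<in>UNIV. ereal (skl_term (W True y) (W False y)))"
    unfolding C_SKL_def by (subst sum.swap) simp
  then show ?thesis by (simp add: skl_sum_def)
qed

lemma BSC_pos: "0 < d \<Longrightarrow> d < 1 \<Longrightarrow> 0 < BSC d x y"
  by (simp add: BSC_def)

lemma C_SKL_BSC_0: "C_SKL (BSC 0) = \<infinity>"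
  by (simp add: C_SKL_def UNIV_bool BSC_def fterm_def skl_f_def)

lemma C_SKL_BSC_nonneg:
  assumes "0 \<le> d" "d < 1"
  shows "0 \<le> C_SKL (BSC d)"
proof (cases "d = 0")
  case True
  then show ?thesis by (simp add: C_SKL_BSC_0)
next
  case False
  then show ?thesis
    using assms BSC_pos skl_sum_nonneg[of "BSC d"] by (simp add: C_SKL_eq_skl_sum)
qed

definition parallel3 ::
  "(bool \<Rightarrow> 'b1 \<Rightarrow> real) \<Rightarrow> (bool \<Rightarrow> 'b2 \<Rightarrow> real) \<Rightarrow> (bool \<Rightarrow> 'b3 \<Rightarrow> real)
   \<Rightarrow> bool \<Rightarrow> 'b1 \<times> 'b2 \<times> 'b3 \<Rightarrow> real" where
  "parallel3 P1 P2 P3 y = tensor3 P1 P2 P3 (y, y, y)"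

lemma sum_UNIV_bool3:
  "(\<Sum>z\<in>UNIV. f z) = (\<Sum>z1\<in>UNIV. \<Sum>z2\<in>UNIV. \<Sum>z3\<in>UNIV. f (z1, z2, z3 :: bool))"
  by (simp add: sum.cartesian_product)

lemma compose_tensor3_B4:
  "compose (tensor3 (BSC d1) (BSC d2) (BSC d3)) (B4 lam) y z
    = (1 - lam) / 8 + lam * parallel3 (BSC d1) (BSC d2) (BSC d3) y z"
  by (cases z) (simp add: compose_def sum_UNIV_bool3 UNIV_bool B4_def tensor3_def parallel3_def BSC_def field_simps)

lemma skl_sum_parallel3_BSC:
  assumes "0 < d1" "d1 < 1" "0 < d2" "d2 < 1" "0 < d3" "d3 < 1"
  shows "skl_sum (parallel3 (BSC d1) (BSC d2) (BSC d3))
    = skl_sum (BSC d1) + skl_sum (BSC d2) + skl_sum (BSC d3)"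
  using assms
  by (simp add: skl_sum_def skl_term_def sum_UNIV_bool3 UNIV_bool parallel3_def tensor3_def BSC_def ln_mult)
     (simp add: field_simps)

lemma skl_term_parallel3_BSC_mix:
  fixes d1 d2 d3 lam :: real
  assumes d: "0 < d1" "d1 < 1" "0 < d2" "d2 < 1" "0 < d3" "d3 < 1"
    and lam: "0 \<le> lam" "lam \<le> 1"
  defines "V \<equiv> parallel3 (BSC d1) (BSC d2) (BSC d3)"
  shows "skl_term ((1 - lam) / 8 + lam * V True z) ((1 - lam) / 8 + lam * V False z)
      \<le> lam\<^sup>2 * skl_term (V True z) (V False z)"
    and "V True z \<noteq> V False z \<Longrightarrow> 0 < lam \<Longrightarrow> lam < 1 \<Longrightarrow>
      skl_term ((1 - lam) / 8 + lam * V True z) ((1 - lam) / 8 + lam * V False z)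
      < lam\<^sup>2 * skl_term (V True z) (V False z)"
proof -
  obtain z1 z2 z3 where z: "z = (z1, z2, z3)" by (cases z)
  define a1 a2 a3 where "a1 = 2 * BSC d1 True z1" and "a2 = 2 * BSC d2 True z2" and "a3 = 2 * BSC d3 True z3"
  define b1 b2 b3 where "b1 = 2 * BSC d1 False z1" and "b2 = 2 * BSC d2 False z2" and "b3 = 2 * BSC d3 False z3"
  define p m where "p = a1 * a2 * a3" and "m = b1 * b2 * b3"
  have ab_pos: "0 < a1" "0 < a2" "0 < a3" "0 < b1" "0 < b2" "0 < b3"
    using d BSC_pos by (simp_all add: a1_def a2_def a3_def b1_def b2_def b3_def)
  have ab_sum: "a1 + b1 = 2" "a2 + b2 = 2" "a3 + b3 = 2"
    by (simp_all add: a1_def a2_def a3_def b1_def b2_def b3_def BSC_def)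
  have V: "V True z = p / 8" "V False z = m / 8"
    by (simp_all add: V_def z parallel3_def tensor3_def p_def m_def a1_def a2_def a3_def b1_def b2_def b3_def)
  have mix_pos: "0 < 1 - lam + lam * x" if "0 < x" for x
    using lam that by (cases "lam = 0") (auto intro: add_nonneg_pos)
  have W_eq: "skl_term ((1 - lam) / 8 + lam * V True z) ((1 - lam) / 8 + lam * V False z)
      = skl_term (1 - lam + lam * p) (1 - lam + lam * m) / 8"
    using ab_pos mix_pos[of p] mix_pos[of m]
    by (simp add: V skl_term_scale[symmetric] p_def m_def add_divide_distrib diff_divide_distrib)
  have V_eq: "skl_term (V True z) (V False z) = skl_term p m / 8"
    using ab_pos by (simp add: V skl_term_scale p_def m_def)
  note mix = skl_term_mix_le[OF ab_pos ab_sum lam, folded p_def m_def]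
  show "skl_term ((1 - lam) / 8 + lam * V True z) ((1 - lam) / 8 + lam * V False z)
      \<le> lam\<^sup>2 * skl_term (V True z) (V False z)"
    unfolding W_eq V_eq using mix(1) by simp
  show "skl_term ((1 - lam) / 8 + lam * V True z) ((1 - lam) / 8 + lam * V False z)
      < lam\<^sup>2 * skl_term (V True z) (V False z)"
    if "V True z \<noteq> V False z" "0 < lam" "lam < 1"
    unfolding W_eq V_eq using mix(2) that by (simp add: V)
qed

lemma skl_sum_parallel3_BSC_mix:
  fixes d1 d2 d3 lam :: real
  assumes d: "0 < d1" "d1 < 1" "0 < d2" "d2 < 1" "0 < d3" "d3 < 1"
    and lam: "0 \<le> lam" "lam \<le> 1"
  defines "V \<equiv> parallel3 (BSC d1) (BSC d2) (BSC d3)"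
  shows "skl_sum (\<lambda>y z. (1 - lam) / 8 + lam * V y z) \<le> lam\<^sup>2 * skl_sum V"
    and "V True z \<noteq> V False z \<Longrightarrow> 0 < lam \<Longrightarrow> lam < 1 \<Longrightarrow>
      skl_sum (\<lambda>y z. (1 - lam) / 8 + lam * V y z) < lam\<^sup>2 * skl_sum V"
proof -
  note mix_term = skl_term_parallel3_BSC_mix[OF d lam, folded V_def]
  show "skl_sum (\<lambda>y z. (1 - lam) / 8 + lam * V y z) \<le> lam\<^sup>2 * skl_sum V"
    unfolding skl_sum_def sum_distrib_left by (intro sum_mono mix_term(1))
  show "skl_sum (\<lambda>y z. (1 - lam) / 8 + lam * V y z) < lam\<^sup>2 * skl_sum V"
    if "V True z \<noteq> V False z" "0 < lam" "lam < 1"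
    unfolding skl_sum_def sum_distrib_left
    using mix_term(2)[OF that] by (intro sum_strict_mono_ex1 ballI bexI[of _ z] mix_term(1)) auto
qed

lemma parallel3_BSC_distinguishes_inputs:
  fixes d1 d2 d3 :: real
  assumes d: "0 < d1" "d1 \<le> 1/2" "0 < d2" "d2 \<le> 1/2" "0 < d3" "d3 \<le> 1/2"
    and "min d1 (min d2 d3) < 1/2"
  shows "parallel3 (BSC d1) (BSC d2) (BSC d3) False (True, True, True)
    < parallel3 (BSC d1) (BSC d2) (BSC d3) True (True, True, True)"
proof -
  have "d1 * d2 * d3 < (1 - d1) * (1 - d2) * (1 - d3)"
  proof -
    consider "d1 < 1/2" | "d2 < 1/2" | "d3 < 1/2" using assms(7) by linarith
    then show ?thesis
    proof cases
      case 1
      show ?thesis by (rule mult_less_le_imp_less) (use 1 d in \<open>auto intro: mult_less_le_imp_less\<close>)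
    next
      case 2
      show ?thesis by (rule mult_less_le_imp_less) (use 2 d in \<open>auto intro: mult_le_less_imp_less\<close>)
    next
      case 3
      show ?thesis by (rule mult_le_less_imp_less) (use 3 d in \<open>auto intro: mult_mono\<close>)
    qed
  qed
  then show ?thesis by (simp add: parallel3_def tensor3_def BSC_def)
qed

lemma C_SKL_uniform_mix:
  fixes V :: "bool \<Rightarrow> 'b::finite \<Rightarrow> real"
  assumes lam: "0 \<le> lam" "lam \<le> 1" and V_nonneg: "\<And>y z. 0 \<le> V y z"
    and pos: "lam < 1 \<or> (\<forall>y z. 0 < V y z)"
  shows "C_SKL (\<lambda>y z. (1 - lam) / 8 + lam * V y z)
    = ereal (skl_sum (\<lambda>y z. (1 - lam) / 8 + lam * V y z))"
proof (rule C_SKL_eq_skl_sum)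
  fix y z
  have "0 \<le> (1 - lam) / 8" "0 \<le> lam * V y z" using lam V_nonneg by simp_all
  moreover have "0 < (1 - lam) / 8 \<or> 0 < lam * V y z"
    using pos lam by (cases "lam < 1") (simp_all del: split_paired_All)
  ultimately show "0 < (1 - lam) / 8 + lam * V y z" by linarith
qed

lemma C_SKL_parallel3_BSC_mix:
  fixes \<Delta>1 \<Delta>2 \<Delta>3 lam :: real
  assumes \<Delta>: "0 < \<Delta>1" "\<Delta>1 \<le> 1/2" "0 < \<Delta>2" "\<Delta>2 \<le> 1/2" "0 < \<Delta>3" "\<Delta>3 \<le> 1/2"
    and lam: "0 \<le> lam" "lam \<le> 1"
  defines "V \<equiv> parallel3 (BSC \<Delta>1) (BSC \<Delta>2) (BSC \<Delta>3)"
  shows "C_SKL (\<lambda>y z. (1 - lam) / 8 + lam * V y z)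
      \<le> ereal (lam\<^sup>2) * (C_SKL (BSC \<Delta>1) + C_SKL (BSC \<Delta>2) + C_SKL (BSC \<Delta>3))"
    and "0 < lam \<Longrightarrow> lam < 1 \<Longrightarrow> min \<Delta>1 (min \<Delta>2 \<Delta>3) < 1/2 \<Longrightarrow>
      C_SKL (\<lambda>y z. (1 - lam) / 8 + lam * V y z)
      < ereal (lam\<^sup>2) * (C_SKL (BSC \<Delta>1) + C_SKL (BSC \<Delta>2) + C_SKL (BSC \<Delta>3))"
proof -
  have \<Delta>': "0 < \<Delta>1" "\<Delta>1 < 1" "0 < \<Delta>2" "\<Delta>2 < 1" "0 < \<Delta>3" "\<Delta>3 < 1" using \<Delta> by auto
  have V_pos: "0 < V y z" for y z
    using \<Delta>' by (cases z) (simp add: V_def parallel3_def tensor3_def BSC_pos)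
  have rhs: "C_SKL (BSC \<Delta>1) + C_SKL (BSC \<Delta>2) + C_SKL (BSC \<Delta>3) = ereal (skl_sum V)"
    using \<Delta>' BSC_pos by (simp add: C_SKL_eq_skl_sum skl_sum_parallel3_BSC V_def)
  have lhs: "C_SKL (\<lambda>y z. (1 - lam) / 8 + lam * V y z)
      = ereal (skl_sum (\<lambda>y z. (1 - lam) / 8 + lam * V y z))"
    using lam V_pos by (intro C_SKL_uniform_mix) (auto intro: less_imp_le)
  note mix = skl_sum_parallel3_BSC_mix[OF \<Delta>' lam, folded V_def]
  show "C_SKL (\<lambda>y z. (1 - lam) / 8 + lam * V y z)
      \<le> ereal (lam\<^sup>2) * (C_SKL (BSC \<Delta>1) + C_SKL (BSC \<Delta>2) + C_SKL (BSC \<Delta>3))"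
    unfolding lhs rhs using mix(1) by simp
  assume "0 < lam" "lam < 1" "min \<Delta>1 (min \<Delta>2 \<Delta>3) < 1/2"
  moreover have "V False (True, True, True) < V True (True, True, True)"
    using parallel3_BSC_distinguishes_inputs[OF \<Delta>] \<open>min \<Delta>1 (min \<Delta>2 \<Delta>3) < 1/2\<close> by (simp add: V_def)
  ultimately show "C_SKL (\<lambda>y z. (1 - lam) / 8 + lam * V y z)
      < ereal (lam\<^sup>2) * (C_SKL (BSC \<Delta>1) + C_SKL (BSC \<Delta>2) + C_SKL (BSC \<Delta>3))"
    unfolding lhs rhs using mix(2)[of "(True, True, True)"] by simp
qed

theorem mainTheorem11:
  fixes lam \<Delta>1 \<Delta>2 \<Delta>3 :: real
  assumes "0 \<le> lam" "lam \<le> 1"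
    and "0 \<le> \<Delta>1" "\<Delta>1 \<le> 1/2" "0 \<le> \<Delta>2" "\<Delta>2 \<le> 1/2" "0 \<le> \<Delta>3" "\<Delta>3 \<le> 1/2"
  shows "C_SKL (compose (tensor3 (BSC \<Delta>1) (BSC \<Delta>2) (BSC \<Delta>3)) (B4 lam))
           \<le> ereal (lam ^ 2) * (C_SKL (BSC \<Delta>1) + C_SKL (BSC \<Delta>2) + C_SKL (BSC \<Delta>3))
    \<and> (0 < lam \<and> lam < 1 \<and> min \<Delta>1 (min \<Delta>2 \<Delta>3) < 1/2 \<longrightarrow>
         C_SKL (compose (tensor3 (BSC \<Delta>1) (BSC \<Delta>2) (BSC \<Delta>3)) (B4 lam))
           < ereal (lam ^ 2) * (C_SKL (BSC \<Delta>1) + C_SKL (BSC \<Delta>2) + C_SKL (BSC \<Delta>3)))"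
proof -
  define V where "V = parallel3 (BSC \<Delta>1) (BSC \<Delta>2) (BSC \<Delta>3)"
  have W_eq: "compose (tensor3 (BSC \<Delta>1) (BSC \<Delta>2) (BSC \<Delta>3)) (B4 lam)
      = (\<lambda>y z. (1 - lam) / 8 + lam * V y z)"
    by (intro ext) (simp add: compose_tensor3_B4 V_def)
  show ?thesis
  proof (cases "0 < \<Delta>1 \<and> 0 < \<Delta>2 \<and> 0 < \<Delta>3")
    case True
    then show ?thesis unfolding W_eq V_def using C_SKL_parallel3_BSC_mix assms by simp
  next
    case False
    \<comment> \<open>Then the right-hand side is infinite unless \<open>lam = 0\<close>, where both sides vanish.\<close>
    have rhs_inf: "C_SKL (BSC \<Delta>1) + C_SKL (BSC \<Delta>2) + C_SKL (BSC \<Delta>3) = \<infinity>"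
      using False assms C_SKL_BSC_nonneg[of \<Delta>1] C_SKL_BSC_nonneg[of \<Delta>2] C_SKL_BSC_nonneg[of \<Delta>3]
      by (auto simp: C_SKL_BSC_0)
    have V_nonneg: "0 \<le> V y z" for y z
      using assms by (cases z) (simp add: V_def parallel3_def tensor3_def BSC_def)
    have lhs: "C_SKL (\<lambda>y z. (1 - lam) / 8 + lam * V y z)
      = ereal (skl_sum (\<lambda>y z. (1 - lam) / 8 + lam * V y z))"
      if "lam < 1" using that assms V_nonneg by (intro C_SKL_uniform_mix) auto
    show ?thesis unfolding W_eq rhs_inf
      using lhs by (cases "lam = 0") (auto simp: skl_sum_def skl_term_def zero_ereal_def)
  qed
qed

end
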